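(* Let $(R,\mathfrak{m})$ be a commutative Artinian local ring with identity, $\mathfrak{m}\neq0$ and $\mathfrak{m}^2=0$. For every integer $n\ge6$, $|R|>4$ if and only if $n-3\in L(x^n)$.
   Context: A nonunit polynomial in $R[x]$ is irreducible if in any factorization into two polynomials one factor is a unit of $R[x]$. A positive integer $k$ is a length of $f$ if $f$ is a product of $k$ irreducible polynomials of $R[x]$; $L(f)$ denotes the set of lengths of $f$. (Since $\mathfrak m\ne 0$, $|R|\ge 4$.) *)

theory Defs
  imports "HOL-Computational_Algebra.Polynomial" "HOL-Computational_Algebra.Factorial_Ring"
begin

definition ring_ideal :: "'a::comm_ring_1 set \<Rightarrow> bool" where
  "ring_ideal I \<longleftrightarrow> 0 \<in> I \<and> (\<forall>a\<in>I. \<forall>b\<in>I. a + b \<in> I) \<and> (\<forall>r. \<forall>a\<in>I. r * a \<in> I)"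

definition maximal_ideal :: "'a::comm_ring_1 set \<Rightarrow> bool" where
  "maximal_ideal M \<longleftrightarrow> ring_ideal M \<and> M \<noteq> UNIV \<and>
     (\<forall>I. ring_ideal I \<and> M \<subseteq> I \<longrightarrow> I = M \<or> I = UNIV)"

definition local_ring :: "'a::comm_ring_1 itself \<Rightarrow> bool" where
  "local_ring _ \<longleftrightarrow> (\<exists>!M::'a set. maximal_ideal M)"

definition artinian_ring :: "'a::comm_ring_1 itself \<Rightarrow> bool" where
  "artinian_ring _ \<longleftrightarrow> (\<forall>f::nat \<Rightarrow> 'a set. (\<forall>n. ring_ideal (f n)) \<and> (\<forall>n. f (Suc n) \<subseteq> f n)
      \<longrightarrow> (\<exists>N. \<forall>n\<ge>N. f n = f N))"

definition lengths :: "'a::comm_ring_1 poly \<Rightarrow> nat set" where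
  "lengths f = {k. k > 0 \<and> (\<exists>ps. length ps = k \<and> (\<forall>p\<in>set ps. irreducible p) \<and> prod_list ps = f)}"

end

theory Submission
  imports Defs
begin

text \<open>Since M is maximal with M^2 = 0, every element outside M is a unit, so reduction modulo M
behaves like reduction to a field: every factor of x^n is, modulo M, a unit times a monomial x^a.
Such a polynomial is irreducible iff a = 1, or a \<ge> 2 and its constant term is nonzero.
A factorisation of x^n into n - 3 irreducibles therefore has weights a_i \<ge> 1 of total excess
\<Sum>(a_i - 1) = 3.

If |R| > 4 then M has two distinct nonzero elements, hence three nonzero elements
c1 + c2 + c3 = 0, and (x^2 + c1)(x^2 + c2)(x^2 + c3) x^(n-6) = x^n.
If |R| = 4 then M = {0, t}, 2t = 0 and units fix t. Then the coefficient A places below the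
weight is additive on products; for A the largest weight occurring, each factor of weight A
contributes t, their number is odd because the excess is 3, but x^n contributes 0.\<close>

lemma x_power_eq_monom: "[:0, 1:] ^ n = monom 1 n"
  by (simp add: monom_altdef)

lemma prod_list_triple_replicate:
  "prod_list ([a, b, c] @ replicate k x) = a * b * c * (x::'a::comm_monoid_mult) ^ k"
  by (simp add: mult.assoc)

lemma quadratics_prod_x_power_6:
  fixes c1 c2 c3 :: "'a::comm_ring_1"
  assumes "c1 + c2 + c3 = 0" "c1 * c2 = 0" "c1 * c3 = 0" "c2 * c3 = 0"
  shows "[:c1, 0, 1:] * [:c2, 0, 1:] * [:c3, 0, 1:] = [:0, 1:] ^ 6"
proof -
  define Y :: "'a poly" where "Y = [:0, 1:] ^ 2"
  have quad: "[:c, 0, 1:] = [:c:] + Y" for c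
    unfolding Y_def by (simp add: power2_eq_square)
  have cubic_expand: "(a + Y) * (b + Y) * (c + Y) = a * b * c + (a * b + a * c + b * c) * Y
      + (a + b + c) * Y * Y + Y * Y * Y" for a b c
    by (simp add: algebra_simps)
  have "[:c1, 0, 1:] * [:c2, 0, 1:] * [:c3, 0, 1:] = [:c1:] * [:c2:] * [:c3:]
      + ([:c1:] * [:c2:] + [:c1:] * [:c3:] + [:c2:] * [:c3:]) * Y
      + ([:c1:] + [:c2:] + [:c3:]) * Y * Y + Y * Y * Y"
    unfolding quad by (rule cubic_expand)
  also have "\<dots> = Y * Y * Y"
    using assms by (simp add: mult.commute[of c2 c1] mult.commute[of c3 c1] mult.commute[of c3 c2])
  also have "\<dots> = [:0, 1:] ^ 6"
    unfolding Y_def by (simp flip: power_add)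
  finally show ?thesis .
qed

locale square_zero_max_ideal =
  fixes M :: "'a::comm_ring_1 set"
  assumes maximal: "maximal_ideal M"
    and square_zero: "\<And>a b. a \<in> M \<Longrightarrow> b \<in> M \<Longrightarrow> a * b = 0"
begin

lemma ideal: "ring_ideal M"
  using maximal unfolding maximal_ideal_def by blast

lemma zero_in_M: "0 \<in> M"
  using ideal unfolding ring_ideal_def by blast

lemma add_in_M: "a \<in> M \<Longrightarrow> b \<in> M \<Longrightarrow> a + b \<in> M"
  using ideal unfolding ring_ideal_def by blast

lemma mult_in_M_left: "a \<in> M \<Longrightarrow> r * a \<in> M"
  using ideal unfolding ring_ideal_def by blast

lemma mult_in_M_right: "a \<in> M \<Longrightarrow> a * r \<in> M"
  using mult_in_M_left[of a r] by (simp add: mult.commute)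

lemma uminus_in_M: "a \<in> M \<Longrightarrow> - a \<in> M"
  using mult_in_M_left[of a "-1"] by simp

lemma diff_in_M: "a \<in> M \<Longrightarrow> b \<in> M \<Longrightarrow> a - b \<in> M"
  using add_in_M[of a "- b"] uminus_in_M[of b] by simp

lemma sum_in_M: "(\<And>i. i \<in> A \<Longrightarrow> f i \<in> M) \<Longrightarrow> sum f A \<in> M"
  by (induction A rule: infinite_finite_induct) (auto simp: zero_in_M add_in_M)

lemma one_not_in_M: "1 \<notin> M"
proof
  assume "1 \<in> M"
  then have "r \<in> M" for r
    using mult_in_M_left[of 1 r] by simp
  then show False
    using maximal unfolding maximal_ideal_def by auto
qed

lemma unit_if_not_in_M:
  assumes r: "r \<notin> M"
  obtains s where "r * s = 1"
proof -
  define I where "I = {m + r * s | m s. m \<in> M}"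
  have "ring_ideal I"
    unfolding ring_ideal_def
  proof (intro conjI ballI allI)
    have "0 + r * 0 \<in> I"
      unfolding I_def using zero_in_M by blast
    then show "0 \<in> I"
      by simp
  next
    fix a b assume "a \<in> I" "b \<in> I"
    then obtain m1 s1 m2 s2 where "a = m1 + r * s1" "m1 \<in> M" "b = m2 + r * s2" "m2 \<in> M"
      unfolding I_def by blast
    then have "a + b = (m1 + m2) + r * (s1 + s2)" "m1 + m2 \<in> M"
      by (auto simp: algebra_simps add_in_M)
    then show "a + b \<in> I"
      unfolding I_def by blast
  next
    fix x a assume "a \<in> I"
    then obtain m s where "a = m + r * s" "m \<in> M"
      unfolding I_def by blast
    then have "x * a = x * m + r * (x * s)" "x * m \<in> M"
      by (auto simp: algebra_simps mult_in_M_left mult_in_M_right)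
    then show "x * a \<in> I"
      unfolding I_def by blast
  qed
  moreover have "m + r * 0 \<in> I" if "m \<in> M" for m
    unfolding I_def using that by blast
  then have "M \<subseteq> I"
    by auto
  moreover have "0 + r * 1 \<in> I"
    unfolding I_def using zero_in_M by blast
  ultimately have "I = UNIV"
    using maximal r unfolding maximal_ideal_def by (metis add_0 mult_1_right)
  then obtain m s where ms: "1 = m + r * s" "m \<in> M"
    unfolding I_def by blast
  \<comment> \<open>r s = 1 - m is a unit with inverse 1 + m, because m^2 = 0.\<close>
  have "r * s = 1 - m"
    using ms(1) by (simp add: algebra_simps)
  then have "r * (s * (1 + m)) = (1 - m) * (1 + m)"
    by (simp add: mult.assoc[symmetric])
  also have "\<dots> = 1"
    using square_zero[OF ms(2) ms(2)] by (simp add: algebra_simps)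
  finally show ?thesis
    by (rule that)
qed

lemma mult_not_in_M:
  assumes "a \<notin> M" "b \<notin> M"
  shows "a * b \<notin> M"
proof
  assume "a * b \<in> M"
  obtain s where "a * s = 1"
    using unit_if_not_in_M assms(1) by blast
  then have "b = s * (a * b)"
    by (metis mult.assoc mult.commute mult_1)
  then show False
    using mult_in_M_left[OF \<open>a * b \<in> M\<close>, of s] assms(2) by simp
qed

lemma annihilator_subset_M:
  assumes "r * t = 0" "t \<noteq> 0"
  shows "r \<in> M"
proof (rule ccontr)
  assume "r \<notin> M"
  then obtain s where "r * s = 1"
    using unit_if_not_in_M by blast
  then have "t = s * (r * t)"
    by (metis mult.assoc mult.commute mult_1)
  then show False
    using assms by simp
qed

subsection \<open>Polynomials that are monomials modulo M\<close>

text \<open>pure a p: modulo M, p is a unit times x^a; a is the weight of p.\<close>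

definition pure :: "nat \<Rightarrow> 'a poly \<Rightarrow> bool" where
  "pure a p \<longleftrightarrow> coeff p a \<notin> M \<and> (\<forall>i. i \<noteq> a \<longrightarrow> coeff p i \<in> M)"

lemma pure_unique: "pure a p \<Longrightarrow> pure b p \<Longrightarrow> a = b"
  unfolding pure_def by blast

lemma pure_x_power: "pure n ([:0, 1:] ^ n)"
  unfolding pure_def by (auto simp: x_power_eq_monom coeff_monom one_not_in_M zero_in_M)

lemma pure_quadratic: "c \<in> M \<Longrightarrow> pure 2 [:c, 0, 1:]"
  unfolding pure_def using one_not_in_M zero_in_M by (auto simp: coeff_pCons split: nat.split)

lemma coeff_mult_not_in_M:
  assumes "coeff p a \<notin> M" "coeff q b \<notin> M"
    and "\<And>i. i \<le> a + b \<Longrightarrow> i \<noteq> a \<Longrightarrow> coeff p i \<in> M \<or> coeff q (a + b - i) \<in> M"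
  shows "coeff (p * q) (a + b) \<notin> M"
proof
  assume in_M: "coeff (p * q) (a + b) \<in> M"
  have "coeff (p * q) (a + b) = (\<Sum>i\<le>a + b. coeff p i * coeff q (a + b - i))"
    by (rule coeff_mult)
  also have "\<dots> =
      coeff p a * coeff q b + (\<Sum>i\<in>{..a + b} - {a}. coeff p i * coeff q (a + b - i))"
    by (subst sum.remove[of _ a]) auto
  finally have "coeff (p * q) (a + b) =
      coeff p a * coeff q b + (\<Sum>i\<in>{..a + b} - {a}. coeff p i * coeff q (a + b - i))" .
  moreover have "(\<Sum>i\<in>{..a + b} - {a}. coeff p i * coeff q (a + b - i)) \<in> M"
    using assms(3) by (intro sum_in_M) (auto intro: mult_in_M_left mult_in_M_right)
  ultimately have "coeff p a * coeff q b \<in> M"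
    using diff_in_M[OF in_M] by force
  then show False
    using mult_not_in_M assms(1,2) by blast
qed

lemma coeff_mult_in_M:
  assumes "\<And>i. i \<le> k \<Longrightarrow> coeff p i \<in> M \<or> coeff q (k - i) \<in> M"
  shows "coeff (p * q) k \<in> M"
  unfolding coeff_mult using assms by (intro sum_in_M) (auto intro: mult_in_M_left mult_in_M_right)

lemma pure_mult:
  assumes p: "pure a p" and q: "pure b q"
  shows "pure (a + b) (p * q)"
  unfolding pure_def
proof (intro conjI allI impI)
  show "coeff (p * q) (a + b) \<notin> M"
    using p q unfolding pure_def by (intro coeff_mult_not_in_M) auto
next
  fix k assume "k \<noteq> a + b"
  then have "i \<noteq> a \<or> k - i \<noteq> b" if "i \<le> k" for i
    using that by auto
  then show "coeff (p * q) k \<in> M"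
    using p q unfolding pure_def by (intro coeff_mult_in_M) blast
qed

lemma coeff_mult_pure:
  assumes p: "pure a p" and q: "pure b q" and k: "k \<noteq> a + b"
  shows "coeff (p * q) k = (if a \<le> k then coeff p a * coeff q (k - a) else 0)
                          + (if b \<le> k then coeff p (k - b) * coeff q b else 0)"
proof -
  \<comment> \<open>Only the terms with i = a or k - i = b survive; these never coincide since k \<noteq> a + b.\<close>
  have summand: "coeff p i * coeff q (k - i) = (if i = a then coeff p a * coeff q (k - i) else 0)
      + (if i = k - b \<and> b \<le> k then coeff p i * coeff q b else 0)" if "i \<le> k" for i
  proof (cases "i = a \<or> k - i = b")
    case False
    then have "coeff p i \<in> M" "coeff q (k - i) \<in> M"
      using p q unfolding pure_def by auto
    then show ?thesis
      using False that square_zero by auto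
  qed (use k that in auto)
  have "coeff (p * q) k = (\<Sum>i\<le>k. (if i = a then coeff p a * coeff q (k - i) else 0)
      + (if i = k - b \<and> b \<le> k then coeff p i * coeff q b else 0))"
    unfolding coeff_mult using summand by (intro sum.cong) auto
  then show ?thesis
    by (simp add: sum.distrib)
qed

lemma pure_factor:
  assumes pq: "pure n (p * q)"
  shows "\<exists>a. pure a p"
proof -
  define S where "S r = {i. coeff r i \<notin> M}" for r :: "'a poly"
  have fin: "finite (S r)" for r
  proof (rule finite_subset)
    show "S r \<subseteq> {..degree r}"
      using zero_in_M by (auto simp: S_def intro!: le_degree)
  qed simp
  have nonempty: "S p \<noteq> {}" "S q \<noteq> {}"
    using pq coeff_mult_in_M[of n p q] coeff_mult_in_M[of n q p]
    unfolding pure_def S_def by (auto simp: mult.commute)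
  \<comment> \<open>The lowest indices outside M add up to n, and so do the highest ones; hence p has only one.\<close>
  have "Min (S p) + Min (S q) = n"
  proof -
    have "coeff (p * q) (Min (S p) + Min (S q)) \<notin> M"
    proof (rule coeff_mult_not_in_M)
      fix i assume "i \<le> Min (S p) + Min (S q)" "i \<noteq> Min (S p)"
      then have "i < Min (S p) \<or> Min (S p) + Min (S q) - i < Min (S q)"
        by linarith
      then show "coeff p i \<in> M \<or> coeff q (Min (S p) + Min (S q) - i) \<in> M"
        using Min_le[OF fin] unfolding S_def by (meson mem_Collect_eq not_le)
    qed (use Min_in[OF fin] nonempty in \<open>auto simp: S_def\<close>)
    then show ?thesis
      using pq unfolding pure_def by auto
  qed
  moreover have "Max (S p) + Max (S q) = n"
  proof -
    have "coeff (p * q) (Max (S p) + Max (S q)) \<notin> M"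
    proof (rule coeff_mult_not_in_M)
      fix i assume "i \<le> Max (S p) + Max (S q)" "i \<noteq> Max (S p)"
      then have "i > Max (S p) \<or> Max (S p) + Max (S q) - i > Max (S q)"
        by linarith
      then show "coeff p i \<in> M \<or> coeff q (Max (S p) + Max (S q) - i) \<in> M"
        using Max_ge[OF fin] unfolding S_def by (meson mem_Collect_eq not_le)
    qed (use Max_in[OF fin] nonempty in \<open>auto simp: S_def\<close>)
    then show ?thesis
      using pq unfolding pure_def by auto
  qed
  moreover have "Min (S p) \<le> Max (S p)" "Min (S q) \<le> Max (S q)"
    using fin nonempty by simp_all
  ultimately have "Min (S p) = Max (S p)"
    by linarith
  then have "i = Min (S p)" if "i \<in> S p" for i
    using Min_le[OF fin that] Max_ge[OF fin that] by linarith
  then have "pure (Min (S p)) p"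
    using Min_in[OF fin nonempty(1)] unfolding pure_def S_def by blast
  then show ?thesis ..
qed

lemma pure_factor_of_prod_list:
  assumes "pure n (prod_list ps)" "p \<in> set ps"
  shows "\<exists>a. pure a p"
proof -
  obtain xs ys where "ps = xs @ p # ys"
    using split_list[OF assms(2)] by blast
  then have "prod_list ps = p * (prod_list xs * prod_list ys)"
    by (simp add: mult.left_commute)
  then show ?thesis
    using pure_factor assms(1) by metis
qed

lemma coeff_0_not_in_M_if_unit:
  assumes "p dvd 1"
  shows "coeff p 0 \<notin> M"
proof
  assume "coeff p 0 \<in> M"
  obtain k where k: "1 = p * k"
    using assms by (auto elim: dvdE)
  have "coeff p 0 * coeff k 0 = 1"
    using arg_cong[OF k, of "\<lambda>r. coeff r 0"] by (simp add: coeff_mult_0)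
  then show False
    using mult_in_M_right[OF \<open>coeff p 0 \<in> M\<close>] one_not_in_M by metis
qed

lemma unit_if_pure_0:
  assumes p: "pure 0 p"
  shows "p dvd 1"
proof -
  obtain s where s: "coeff p 0 * s = 1"
    using unit_if_not_in_M p unfolding pure_def by blast
  define h where "h = p - [:coeff p 0:]"
  have "coeff h i \<in> M" for i
    using p zero_in_M unfolding h_def pure_def by (cases i) auto
  then have hh: "h * h = 0"
    by (intro poly_eqI) (simp add: coeff_mult square_zero)
  \<comment> \<open>p = u + h with u a unit constant and h^2 = 0, so p^-1 = u^-1 - u^-2 h.\<close>
  have "p * ([:s:] - [:s * s:] * h) = ([:coeff p 0:] + h) * ([:s:] - [:s * s:] * h)"
    unfolding h_def by simp
  also have "\<dots> = [:coeff p 0 * s:] + [:s:] * h - [:coeff p 0 * s * s:] * h - [:s * s:] * (h * h)"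
    by (simp add: algebra_simps)
  also have "\<dots> = 1"
    using s hh by (simp add: one_pCons)
  finally show ?thesis
    by (metis dvdI)
qed

lemma pure_weight_pos_if_irreducible:
  assumes "irreducible p" "pure a p"
  shows "a \<ge> 1"
  using assms unit_if_pure_0 unfolding irreducible_def by (metis less_one not_le)

lemma coeff_0_nonzero_if_irreducible:
  assumes irr: "irreducible p" and p: "pure a p" and a: "a \<ge> 2"
  shows "coeff p 0 \<noteq> 0"
proof
  assume "coeff p 0 = 0"
  obtain c q where "p = pCons c q"
    by (cases p)
  with \<open>coeff p 0 = 0\<close> have pq: "p = [:0, 1:] * q"
    by simp
  have "coeff q 0 = coeff p 1"
    using pq by simp
  then have "coeff q 0 \<in> M"
    using p a unfolding pure_def by auto
  moreover have "coeff [:0, 1:] 0 \<in> M"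
    using zero_in_M by simp
  ultimately show False
    using irr pq coeff_0_not_in_M_if_unit unfolding irreducible_def by blast
qed

lemma irreducible_if_pure:
  assumes p: "pure a p" and a: "a \<ge> 1" and c: "a = 1 \<or> coeff p 0 \<noteq> 0"
  shows "irreducible p"
  unfolding irreducible_def
proof (intro conjI allI impI)
  show "p \<noteq> 0"
    using p zero_in_M unfolding pure_def by auto
  have "coeff p 0 \<in> M"
    using p a unfolding pure_def by auto
  then show "\<not> p dvd 1"
    using coeff_0_not_in_M_if_unit by blast
next
  fix x y assume xy: "p = x * y"
  obtain \<alpha> \<beta> where x: "pure \<alpha> x" and y: "pure \<beta> y"
    using pure_factor[of a x y] pure_factor[of a y x] p xy by (auto simp: mult.commute)
  have ab: "\<alpha> + \<beta> = a"
    using pure_mult[OF x y] p xy pure_unique by blast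
  show "x dvd 1 \<or> y dvd 1"
  proof (cases "\<alpha> = 0 \<or> \<beta> = 0")
    case False
    then have "coeff p 0 \<noteq> 0"
      using ab c by auto
    moreover have "coeff (x * y) 0 = 0"
      using coeff_mult_pure[OF x y, of 0] False by auto
    ultimately show ?thesis
      using xy by simp
  qed (use unit_if_pure_0 x y in auto)
qed

subsection \<open>Weights and the coefficients below them\<close>

definition weight :: "'a poly \<Rightarrow> nat" where
  "weight p = (LEAST a. coeff p a \<notin> M)"

lemma weight_eq: "pure a p \<Longrightarrow> weight p = a"
  unfolding weight_def pure_def by (rule Least_equality) (auto intro: ccontr)

lemma pure_weight: "pure a p \<Longrightarrow> pure (weight p) p"
  using weight_eq by simp

lemma pure_prod_list:
  "(\<And>p. p \<in> set ps \<Longrightarrow> \<exists>a. pure a p) \<Longrightarrow> pure (\<Sum>p\<leftarrow>ps. weight p) (prod_list ps)"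
proof (induction ps)
  case Nil
  show ?case
    unfolding pure_def using one_not_in_M zero_in_M by (auto simp: coeff_1)
next
  case (Cons p ps)
  then obtain a where "pure a p"
    by auto
  then show ?case
    using pure_mult[OF pure_weight Cons.IH] Cons.prems by simp
qed

definition lower_coeff :: "nat \<Rightarrow> 'a poly \<Rightarrow> 'a" where
  "lower_coeff e p = (if e \<le> weight p then coeff p (weight p - e) else 0)"

text \<open>When units act trivially on M, of the two terms of coeff_mult_pure at index weight - e
each is the lower coefficient of one factor, the unit leading coefficient of the other being invisible.\<close>

lemma lower_coeff_mult:
  assumes units_fix_M: "\<And>r m. r \<notin> M \<Longrightarrow> m \<in> M \<Longrightarrow> r * m = m"
    and p: "pure a p" and q: "pure b q" and e: "e \<ge> 1"
  shows "lower_coeff e (p * q) = lower_coeff e p + lower_coeff e q"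
proof (cases "e \<le> a + b")
  case True
  have w: "weight (p * q) = a + b" "weight p = a" "weight q = b"
    using weight_eq pure_mult[OF p q] p q by auto
  have "a + b - e \<noteq> a + b"
    using True e by auto
  moreover have "(if a \<le> a + b - e then coeff p a * coeff q (a + b - e - a) else 0)
      = lower_coeff e q"
    using True e p q units_fix_M unfolding lower_coeff_def w pure_def by auto
  moreover have "(if b \<le> a + b - e then coeff p (a + b - e - b) * coeff q b else 0)
      = lower_coeff e p"
    using True e p q units_fix_M unfolding lower_coeff_def w pure_def
    by (auto simp: mult.commute[of "coeff p _"])
  ultimately show ?thesis
    unfolding lower_coeff_def[of e "p * q"] w using True coeff_mult_pure[OF p q]
    by (simp add: add.commute)
next
  case False
  then show ?thesis
    using weight_eq pure_mult[OF p q] p q unfolding lower_coeff_def by auto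
qed

lemma lower_coeff_prod_list:
  assumes units_fix_M: "\<And>r m. r \<notin> M \<Longrightarrow> m \<in> M \<Longrightarrow> r * m = m" and e: "e \<ge> 1"
  shows "(\<And>p. p \<in> set ps \<Longrightarrow> \<exists>a. pure a p) \<Longrightarrow>
    lower_coeff e (prod_list ps) = (\<Sum>p\<leftarrow>ps. lower_coeff e p)"
proof (induction ps)
  case Nil
  have "weight 1 = 0"
    using weight_eq[of 0 1] one_not_in_M zero_in_M unfolding pure_def by (auto simp: coeff_1)
  then show ?case
    using e unfolding lower_coeff_def by auto
next
  case (Cons p ps)
  then obtain a where "pure a p"
    by auto
  then show ?case
    using lower_coeff_mult[OF units_fix_M _ pure_prod_list e] Cons by auto
qed

end

lemma count_list_le_excess:
  fixes ws :: "nat list"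
  shows "(A - 1) * count_list ws A \<le> (\<Sum>w\<leftarrow>ws. w - 1)"
  by (induction ws) auto

lemma excess_eq_count_list_2:
  fixes ws :: "nat list"
  shows "\<forall>w\<in>set ws. 1 \<le> w \<and> w \<le> 2 \<Longrightarrow> (\<Sum>w\<leftarrow>ws. w - 1) = count_list ws 2"
  by (induction ws) (auto simp: le_Suc_eq)

lemma excess_eq_sum_minus_length:
  fixes ws :: "nat list"
  shows "\<forall>w\<in>set ws. 1 \<le> w \<Longrightarrow> (\<Sum>w\<leftarrow>ws. w - 1) + length ws = sum_list ws"
  by (induction ws) auto

lemma odd_count_list_Max_if_excess_3:
  fixes ws :: "nat list"
  assumes pos: "\<forall>w\<in>set ws. 1 \<le> w" and excess: "(\<Sum>w\<leftarrow>ws. w - 1) = 3"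
  shows "Max (set ws) \<ge> 2" "odd (count_list ws (Max (set ws)))"
proof -
  define A where "A = Max (set ws)"
  have "ws \<noteq> []"
    using excess by auto
  then have A_in: "A \<in> set ws" and le_A: "\<And>w. w \<in> set ws \<Longrightarrow> w \<le> A"
    unfolding A_def by auto
  have count_pos: "count_list ws A \<ge> 1"
    using A_in by (metis count_list_0_iff less_one not_le)
  show A2: "Max (set ws) \<ge> 2"
  proof (rule ccontr)
    assume "\<not> ?thesis"
    then have "\<forall>w\<in>set ws. w - 1 = 0"
      using le_A unfolding A_def by (metis Suc_1 diff_is_0_eq le_trans not_less_eq_eq)
    then have "(\<Sum>w\<leftarrow>ws. w - 1) = 0"
      by simp
    then show False
      using excess by linarith
  qed
  show "odd (count_list ws (Max (set ws)))"
  proof (cases "A = 2")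
    case True
    then show ?thesis
      using excess excess_eq_count_list_2[of ws] pos le_A unfolding A_def by auto
  next
    case False
    then have "2 * count_list ws A \<le> (A - 1) * count_list ws A"
      using A2 unfolding A_def by (intro mult_le_mono1) linarith
    also have "\<dots> \<le> 3"
      using count_list_le_excess[of A ws] excess by simp
    finally show ?thesis
      using count_pos unfolding A_def by presburger
  qed
qed

lemma sum_list_if_eq_of_nat_mult:
  fixes t :: "'a::comm_ring_1"
  shows "(\<Sum>x\<leftarrow>xs. if P x then t else 0) = of_nat (length (filter P xs)) * t"
  by (induction xs) (auto simp: algebra_simps)

lemma of_nat_odd_mult_self:
  fixes t :: "'a::comm_ring_1"
  assumes "odd c" "t + t = 0"
  shows "of_nat c * t = t"
proof -
  obtain b where "c = 2 * b + 1"
    using assms(1) by (auto elim: oddE)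
  moreover have "of_nat (2 * b + 1) * t = of_nat b * (t + t) + t"
    by (simp add: algebra_simps)
  ultimately show ?thesis
    using assms(2) by simp
qed

context square_zero_max_ideal
begin

lemma n_minus_3_in_lengths_if_zero_sum_triple:
  assumes c: "c1 \<in> M" "c2 \<in> M" "c3 \<in> M" "c1 \<noteq> 0" "c2 \<noteq> 0" "c3 \<noteq> 0" "c1 + c2 + c3 = 0"
    and n: "n \<ge> 6"
  shows "n - 3 \<in> lengths ([:0, 1:] ^ n :: 'a poly)"
proof -
  define ps where "ps = [[:c1, 0, 1:], [:c2, 0, 1:], [:c3, 0, 1:]] @ replicate (n - 6) [:0, 1:]"
  have "prod_list ps = [:0, 1:] ^ 6 * [:0, 1:] ^ (n - 6)"
    unfolding ps_def using quadratics_prod_x_power_6[of c1 c2 c3] c square_zero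
    by (simp only: prod_list_triple_replicate)
  also have "\<dots> = [:0, 1:] ^ n"
    using n by (simp flip: power_add)
  finally have "prod_list ps = [:0, 1:] ^ n" .
  moreover have "irreducible [:c, 0, 1:]" if "c \<in> M" "c \<noteq> 0" for c
    using irreducible_if_pure[OF pure_quadratic[OF that(1)]] that by simp
  moreover have "irreducible [:0, 1::'a:]"
    using irreducible_if_pure[OF pure_x_power[of 1]] by simp
  ultimately have "\<forall>p\<in>set ps. irreducible p"
    unfolding ps_def using c by auto
  moreover have "length ps = n - 3" "n - 3 > 0"
    unfolding ps_def using n by simp_all
  ultimately show ?thesis
    unfolding lengths_def using \<open>prod_list ps = [:0, 1:] ^ n\<close> by blast
qed

lemma weights_of_irreducible_factors_of_x_power:
  assumes prod: "prod_list ps = [:0, 1:] ^ n" and irr: "\<And>p. p \<in> set ps \<Longrightarrow> irreducible p"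
  shows "\<And>p. p \<in> set ps \<Longrightarrow> pure (weight p) p \<and> weight p \<ge> 1"
    and "(\<Sum>p\<leftarrow>ps. weight p) = n"
proof -
  have pure_factors: "\<exists>a. pure a p" if "p \<in> set ps" for p
    using pure_factor_of_prod_list[of n ps p] prod pure_x_power that by auto
  then show "pure (weight p) p \<and> weight p \<ge> 1" if "p \<in> set ps" for p
    using pure_weight pure_weight_pos_if_irreducible irr that by blast
  show "(\<Sum>p\<leftarrow>ps. weight p) = n"
    using pure_prod_list[OF pure_factors] prod pure_x_power pure_unique by metis
qed

lemma units_fix_M_if_M_eq_pair:
  assumes M: "M = {0, t}" and t: "t \<noteq> 0" and "r \<notin> M" "m \<in> M"
  shows "r * m = m"
  using annihilator_subset_M[of r t] mult_in_M_left[of t r] assms by auto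

lemma lower_coeff_irreducible_if_M_eq_pair:
  assumes M: "M = {0, t}" and irr: "irreducible p" and p: "pure (weight p) p"
    and A: "2 \<le> A" "weight p \<le> A"
  shows "lower_coeff A p = (if weight p = A then t else 0)"
proof (cases "weight p = A")
  case True
  then have "coeff p 0 \<noteq> 0" "coeff p 0 \<in> M"
    using coeff_0_nonzero_if_irreducible[OF irr p] p A unfolding pure_def by auto
  then show ?thesis
    using True M unfolding lower_coeff_def by auto
next
  case False
  then show ?thesis
    using A unfolding lower_coeff_def by auto
qed

lemma n_minus_3_notin_lengths_if_M_eq_pair:
  assumes M: "M = {0, t}" and t: "t \<noteq> 0"
  shows "n - 3 \<notin> lengths ([:0, 1:] ^ n :: 'a poly)"
proof
  assume "n - 3 \<in> lengths ([:0, 1:] ^ n :: 'a poly)"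
  then obtain ps :: "'a poly list" where len: "length ps = n - 3" "n - 3 > 0"
    and irr: "\<And>p. p \<in> set ps \<Longrightarrow> irreducible p" and prod: "prod_list ps = [:0, 1:] ^ n"
    unfolding lengths_def by blast
  note factors = weights_of_irreducible_factors_of_x_power[OF prod irr]
  define ws where "ws = map weight ps"
  have pos: "\<forall>w\<in>set ws. 1 \<le> w"
    using factors(1) unfolding ws_def by auto
  have excess: "(\<Sum>w\<leftarrow>ws. w - 1) = 3"
    using excess_eq_sum_minus_length[OF pos] factors(2) len unfolding ws_def by simp
  define A where "A = Max (set ws)"
  have A2: "A \<ge> 2" and odd: "odd (count_list ws A)"
    using odd_count_list_Max_if_excess_3[OF pos excess] unfolding A_def by auto
  have "lower_coeff A ([:0, 1:] ^ n) = (\<Sum>p\<leftarrow>ps. lower_coeff A p)"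
    unfolding prod[symmetric] using A2 factors(1)
    by (intro lower_coeff_prod_list[OF units_fix_M_if_M_eq_pair[OF M t]]) auto
  also have "\<dots> = (\<Sum>p\<leftarrow>ps. if weight p = A then t else 0)"
    using lower_coeff_irreducible_if_M_eq_pair[OF M irr] factors(1) A2
    unfolding A_def ws_def by (intro arg_cong[where f = sum_list] map_cong) auto
  also have "\<dots> = of_nat (count_list ws A) * t"
    unfolding sum_list_if_eq_of_nat_mult count_list_eq_length_filter ws_def
    by (simp add: eq_commute comp_def)
  also have "\<dots> = t"
    using odd add_in_M[of t t] t M by (intro of_nat_odd_mult_self) auto
  finally have "lower_coeff A ([:0, 1:] ^ n) = t" .
  moreover have "lower_coeff A ([:0, 1:] ^ n) = 0"
    using A2 unfolding lower_coeff_def weight_eq[OF pure_x_power]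
    by (auto simp: x_power_eq_monom coeff_monom)
  ultimately show False
    using t by simp
qed

lemma UNIV_eq_if_M_eq_pair:
  assumes M: "M = {0, t}" and t: "t \<noteq> 0"
  shows "(UNIV :: 'a set) = {0, t, 1, 1 + t}"
proof -
  \<comment> \<open>r t \<in> {0, t}; in the first case r \<in> M, in the second (r - 1) t = 0, so r - 1 \<in> M.\<close>
  have "r \<in> {0, t, 1, 1 + t}" for r
  proof (cases "r * t = 0")
    case True
    then show ?thesis
      using annihilator_subset_M[OF _ t] M by auto
  next
    case False
    then have "(r - 1) * t = 0"
      using mult_in_M_left[of t r] M by (auto simp: algebra_simps)
    then have "r - 1 = 0 \<or> r - 1 = t"
      using annihilator_subset_M[OF _ t] M by blast
    moreover have "r = (r - 1) + 1"
      by simp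
    ultimately show ?thesis
      by (auto simp: add.commute)
  qed
  then show ?thesis
    by blast
qed

lemma card_ge_5_if_M_non_pair:
  assumes "finite (UNIV :: 'a set)" and "t \<in> M" "s \<in> M" "t \<noteq> 0" "s \<noteq> 0" "s \<noteq> t"
  shows "card (UNIV :: 'a set) \<ge> 5"
proof -
  have "x \<noteq> 1" "x \<noteq> 1 + t" if "x \<in> M" for x
    using that one_not_in_M diff_in_M[of "1 + t" t] \<open>t \<in> M\<close> by auto
  then have "card {0, t, s, 1, 1 + t} = 5"
    using assms zero_in_M by auto
  then show ?thesis
    using card_mono[OF assms(1), of "{0, t, s, 1, 1 + t}"] by simp
qed

lemma zero_sum_triple:
  assumes "t \<in> M" "s \<in> M" "t \<noteq> 0" "s \<noteq> 0" "s \<noteq> t"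
  obtains c1 c2 c3 where "c1 \<in> M" "c2 \<in> M" "c3 \<in> M" "c1 \<noteq> 0" "c2 \<noteq> 0" "c3 \<noteq> 0"
    "c1 + c2 + c3 = 0"
proof (cases "t + s = 0")
  case True
  then have "t + t \<noteq> 0"
    using assms(5) by (metis add_left_imp_eq)
  show ?thesis
    by (rule that[of t t "- (t + t)"]) (use assms \<open>t + t \<noteq> 0\<close> uminus_in_M[OF add_in_M[OF assms(1,1)]] in auto)
next
  case False
  show ?thesis
    by (rule that[of t s "- (t + s)"]) (use assms False uminus_in_M[OF add_in_M[OF assms(1,2)]] in auto)
qed

end

theorem proposition4p11:
  fixes M :: "'a::comm_ring_1 set" and n :: nat
  assumes "artinian_ring TYPE('a)"
    and "local_ring TYPE('a)"
    and "maximal_ideal M"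
    and "M \<noteq> {0}"
    and "\<forall>a\<in>M. \<forall>b\<in>M. a * b = 0"
    and "n \<ge> 6"
  shows "(infinite (UNIV :: 'a set) \<or> card (UNIV :: 'a set) > 4) \<longleftrightarrow>
         n - 3 \<in> lengths ([:0, 1:] ^ n :: 'a poly)"
proof -
  interpret square_zero_max_ideal M
    using assms(3,5) by unfold_locales auto
  obtain t where t: "t \<in> M" "t \<noteq> 0"
    using assms(4) zero_in_M by blast
  show ?thesis
  proof (cases "M = {0, t}")
    case True
    then have "card (UNIV :: 'a set) \<le> 4"
      using UNIV_eq_if_M_eq_pair[OF True t(2)] card_length[of "[0, t, 1, 1 + t]"] by simp
    then show ?thesis
      using UNIV_eq_if_M_eq_pair[OF True t(2)] n_minus_3_notin_lengths_if_M_eq_pair[OF True t(2)]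
      by (metis finite.emptyI finite_insert not_le)
  next
    case False
    then obtain s where s: "s \<in> M" "s \<noteq> 0" "s \<noteq> t"
      using t zero_in_M by blast
    then obtain c1 c2 c3 where "c1 \<in> M" "c2 \<in> M" "c3 \<in> M" "c1 \<noteq> 0" "c2 \<noteq> 0" "c3 \<noteq> 0"
      "c1 + c2 + c3 = 0"
      using zero_sum_triple t by metis
    then show ?thesis
      using n_minus_3_in_lengths_if_zero_sum_triple assms(6) card_ge_5_if_M_non_pair t s by fastforce
  qed
qed

end
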